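(* In the two-tier residency matching game described in the context with any list length $K\ge 1$ and $v\ge e/(e-1)$, under the large market approximation, the social welfare of the symmetric Nash equilibrium is at least half of the OPTIMUM welfare $2(v+r)n$; i.e., the loss of efficiency of equilibrium compared to OPTIMUM is at most a factor of $2$.
   Context: Model: there are $n$ high-tier and $rn$ low-tier doctors ($r>0$), and $n$ high-tier and $rn$ low-tier hospitals, each with one position. Every hospital prefers every high doctor to every low doctor and every doctor prefers every high hospital to every low hospital; within a tier, preferences are independent uniformly random permutations. Each doctor submits a ranked list of exactly $K$ hospitals: a strategy $(k,K-k)$ lists his $k$ most preferred high hospitals followed by his $K-k$ most preferred low hospitals. Hospitals submit full true rankings; doctor-proposing deferred acceptance is run. Values: a doctor gets $v>1$ if matched to a high hospital, $1$ if matched to a low one, $0$ if unmatched; a hospital gets $v$ if matched to a high doctor, $1$ if matched to a low doctor, $0$ if unfilled. Social welfare is the sum of the values of all doctors and hospitals. Large market approximation: $n\to\infty$ with $r,K,v$ fixed, and each application to a hospital is accepted independently with a probability determined by the aggregate strategy profile through fixed-point equations (expected matched doctors = expected hospitals receiving at least one admissible application; a hospital receiving on average $\lambda$ applications gets none with probability $e^{-\lambda}$; low doctors' applications to hospitals already taken by high doctors are rejected). Equilibrium: symmetric Nash equilibrium, all doctors of a tier using the same (possibly mixed) strategy, each maximizing expected value given the acceptance probabilities. OPTIMUM: the welfare $2(v+r)n$ of the matching in which every high doctor is matched to a high hospital and every low doctor to a low hospital (the deferred acceptance outcome with full lists). *)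

theory Defs
  imports Complex_Main
begin

text \<open>
Strategy k (0 \<le> k \<le> K) means: list the k most preferred high hospitals,
then the K-k most preferred low hospitals.  A mixed strategy of a tier is a
probability vector x over {0..K}; x k = fraction of doctors of that tier using (k,K-k).
Acceptance probabilities:
  p1: high doctor at high hospital,  p2: high doctor at low hospital,
  p3: low doctor at high hospital,   p4: low doctor at low hospital.
All quantities are normalised by n (n high doctors/hospitals, r n low ones).
\<close>

definition mixed_strategy :: "nat \<Rightarrow> (nat \<Rightarrow> real) \<Rightarrow> bool" where
  "mixed_strategy K x \<longleftrightarrow> (\<forall>k. 0 \<le> x k) \<and> (\<Sum>k\<le>K. x k) = 1"

text \<open>Expected number (per doctor of the tier) of matches / applications in the
first (high) phase and second (low) phase of the list.\<close>

definition first_match :: "nat \<Rightarrow> (nat \<Rightarrow> real) \<Rightarrow> real \<Rightarrow> real" where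
  "first_match K x p = (\<Sum>k\<le>K. x k * (1 - (1 - p) ^ k))"

definition first_apps :: "nat \<Rightarrow> (nat \<Rightarrow> real) \<Rightarrow> real \<Rightarrow> real" where
  "first_apps K x p = (\<Sum>k\<le>K. x k * (\<Sum>j<k. (1 - p) ^ j))"

definition second_match :: "nat \<Rightarrow> (nat \<Rightarrow> real) \<Rightarrow> real \<Rightarrow> real \<Rightarrow> real" where
  "second_match K x p q = (\<Sum>k\<le>K. x k * (1 - p) ^ k * (1 - (1 - q) ^ (K - k)))"

definition second_apps :: "nat \<Rightarrow> (nat \<Rightarrow> real) \<Rightarrow> real \<Rightarrow> real \<Rightarrow> real" where
  "second_apps K x p q = (\<Sum>k\<le>K. x k * (1 - p) ^ k * (\<Sum>j<K - k. (1 - q) ^ j))"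

text \<open>Average numbers of applications per hospital:
  lam1: high doctors to each high hospital, lam2: high doctors to each low hospital,
  lam3: low doctors to each high hospital,  lam4: low doctors to each low hospital.\<close>

definition lam1 :: "nat \<Rightarrow> (nat \<Rightarrow> real) \<Rightarrow> real \<Rightarrow> real" where
  "lam1 K x p1 = first_apps K x p1"

definition lam2 :: "nat \<Rightarrow> real \<Rightarrow> (nat \<Rightarrow> real) \<Rightarrow> real \<Rightarrow> real \<Rightarrow> real" where
  "lam2 K r x p1 p2 = second_apps K x p1 p2 / r"

definition lam3 :: "nat \<Rightarrow> real \<Rightarrow> (nat \<Rightarrow> real) \<Rightarrow> real \<Rightarrow> real" where
  "lam3 K r y p3 = r * first_apps K y p3"

definition lam4 :: "nat \<Rightarrow> (nat \<Rightarrow> real) \<Rightarrow> real \<Rightarrow> real \<Rightarrow> real" where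
  "lam4 K y p3 p4 = second_apps K y p3 p4"

text \<open>Fixed-point equations: expected matched doctors = expected hospitals receiving
at least one admissible application.  When no applications at all reach a class of
hospitals (lam = 0) the equation is vacuous and the acceptance probability is the
limiting value (an application is accepted iff the hospital is admissible).\<close>

definition fixed_point ::
  "nat \<Rightarrow> real \<Rightarrow> (nat \<Rightarrow> real) \<Rightarrow> (nat \<Rightarrow> real) \<Rightarrow> real \<Rightarrow> real \<Rightarrow> real \<Rightarrow> real \<Rightarrow> bool" where
  "fixed_point K r x y p1 p2 p3 p4 \<longleftrightarrow>
     p1 \<in> {0..1} \<and> p2 \<in> {0..1} \<and> p3 \<in> {0..1} \<and> p4 \<in> {0..1} \<and>
     first_match K x p1 = 1 - exp (- lam1 K x p1) \<and>
     (lam1 K x p1 = 0 \<longrightarrow> p1 = 1) \<and>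
     second_match K x p1 p2 = r * (1 - exp (- lam2 K r x p1 p2)) \<and>
     (lam2 K r x p1 p2 = 0 \<longrightarrow> p2 = 1) \<and>
     r * first_match K y p3 = exp (- lam1 K x p1) * (1 - exp (- lam3 K r y p3)) \<and>
     (lam3 K r y p3 = 0 \<longrightarrow> p3 = exp (- lam1 K x p1)) \<and>
     second_match K y p3 p4 = exp (- lam2 K r x p1 p2) * (1 - exp (- lam4 K y p3 p4)) \<and>
     (lam4 K y p3 p4 = 0 \<longrightarrow> p4 = exp (- lam2 K r x p1 p2))"

definition doctor_value :: "real \<Rightarrow> nat \<Rightarrow> real \<Rightarrow> real \<Rightarrow> nat \<Rightarrow> real" where
  "doctor_value v K p q k = v * (1 - (1 - p) ^ k) + (1 - p) ^ k * (1 - (1 - q) ^ (K - k))"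

definition symmetric_NE ::
  "nat \<Rightarrow> real \<Rightarrow> real \<Rightarrow> (nat \<Rightarrow> real) \<Rightarrow> (nat \<Rightarrow> real) \<Rightarrow> real \<Rightarrow> real \<Rightarrow> real \<Rightarrow> real \<Rightarrow> bool" where
  "symmetric_NE K r v x y p1 p2 p3 p4 \<longleftrightarrow>
     mixed_strategy K x \<and> mixed_strategy K y \<and>
     fixed_point K r x y p1 p2 p3 p4 \<and>
     (\<forall>k\<le>K. 0 < x k \<longrightarrow> (\<forall>k'\<le>K. doctor_value v K p1 p2 k' \<le> doctor_value v K p1 p2 k)) \<and>
     (\<forall>k\<le>K. 0 < y k \<longrightarrow> (\<forall>k'\<le>K. doctor_value v K p3 p4 k' \<le> doctor_value v K p3 p4 k))"

definition welfare ::
  "nat \<Rightarrow> real \<Rightarrow> real \<Rightarrow> (nat \<Rightarrow> real) \<Rightarrow> (nat \<Rightarrow> real) \<Rightarrow> real \<Rightarrow> real \<Rightarrow> real \<Rightarrow> real \<Rightarrow> real" where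
  "welfare K r v x y p1 p2 p3 p4 =
     (\<Sum>k\<le>K. x k * doctor_value v K p1 p2 k)
   + r * (\<Sum>k\<le>K. y k * doctor_value v K p3 p4 k)
   + (v * (1 - exp (- lam1 K x p1))
      + exp (- lam1 K x p1) * (1 - exp (- lam3 K r y p3)))
   + r * (v * (1 - exp (- lam2 K r x p1 p2))
      + exp (- lam2 K r x p1 p2) * (1 - exp (- lam4 K y p3 p4)))"

definition optimum :: "real \<Rightarrow> real \<Rightarrow> real" where
  "optimum r v = 2 * (v + r)"

end

theory Submission
  imports Defs
begin

text \<open>
Each tier alone earns at least its share of OPTIMUM.  By the fixed-point equation,
an acceptance probability p with p \<lambda> = c (1 - e^{-\<lambda>}) satisfies p \<ge> c e^{-\<lambda>},
because 1 - e^{-\<lambda>} \<ge> \<lambda> e^{-\<lambda>}.  A high doctor could deviate to (K,0) and get at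
least v p1 \<ge> v e^{-\<lambda>1}, while high hospitals get at least v (1 - e^{-\<lambda>1}): together v.
A low doctor could deviate to (0,K) and get at least p4 \<ge> e^{-\<lambda>2} e^{-\<lambda>4}, while low
hospitals are filled with probability 1 - e^{-\<lambda>2} e^{-\<lambda>4}: together 1 per low pair.
Hence welfare \<ge> v + r = OPTIMUM / 2.
\<close>

lemma first_match_eq: "first_match K x p = p * first_apps K x p"
proof -
  have "1 - (1 - p) ^ k = p * (\<Sum>j<k. (1 - p) ^ j)" for k
    using one_diff_power_eq[of "1 - p" k] by simp
  then have "x k * (1 - (1 - p) ^ k) = p * (x k * (\<Sum>j<k. (1 - p) ^ j))" for k
    by (simp only: mult.left_commute)
  then show ?thesis
    unfolding first_match_def first_apps_def sum_distrib_left by simp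
qed

lemma second_match_eq: "second_match K x p q = q * second_apps K x p q"
proof -
  have "1 - (1 - q) ^ (K - k) = q * (\<Sum>j<K - k. (1 - q) ^ j)" for k
    using one_diff_power_eq[of "1 - q" "K - k"] by simp
  then have "x k * (1 - p) ^ k * (1 - (1 - q) ^ (K - k))
      = q * (x k * (1 - p) ^ k * (\<Sum>j<K - k. (1 - q) ^ j))" for k
    by (simp only: mult.left_commute)
  then show ?thesis
    unfolding second_match_def second_apps_def sum_distrib_left by simp
qed

lemma first_apps_nonneg:
  assumes "mixed_strategy K x" "p \<in> {0..1}"
  shows "0 \<le> first_apps K x p"
  using assms unfolding first_apps_def mixed_strategy_def
  by (intro sum_nonneg mult_nonneg_nonneg) auto

lemma second_apps_nonneg:
  assumes "mixed_strategy K x" "p \<in> {0..1}" "q \<in> {0..1}"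
  shows "0 \<le> second_apps K x p q"
  using assms unfolding second_apps_def mixed_strategy_def
  by (intro sum_nonneg mult_nonneg_nonneg) auto

lemma acceptance_ge_exp:
  fixes p t c :: real
  assumes "0 \<le> t" "0 \<le> c" "p * t = c * (1 - exp (- t))" "t = 0 \<longrightarrow> p = c"
  shows "c * exp (- t) \<le> p"
proof (cases "t = 0")
  case True
  then show ?thesis using assms by simp
next
  case False
  then have "0 < t" using assms(1) by simp
  have "t * exp (- t) \<le> 1 - exp (- t)"
    using exp_ge_add_one_self[of t] by (simp add: exp_minus field_simps)
  then have "c * (t * exp (- t)) \<le> c * (1 - exp (- t))"
    using assms(2) by (rule mult_left_mono)
  then have "t * (c * exp (- t)) \<le> t * p"
    using assms(3) by (simp add: algebra_simps)
  then show ?thesis using \<open>0 < t\<close> by simp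
qed

lemma fixed_point_high_acceptance_ge:
  assumes "fixed_point K r x y p1 p2 p3 p4" "mixed_strategy K x"
  shows "exp (- lam1 K x p1) \<le> p1"
proof -
  note fp = assms(1)[unfolded fixed_point_def]
  have "0 \<le> lam1 K x p1"
    unfolding lam1_def using first_apps_nonneg[OF assms(2)] fp by simp
  from acceptance_ge_exp[OF this, of 1 p1] show ?thesis
    using fp first_match_eq[of K x p1] by (simp add: lam1_def)
qed

lemma fixed_point_low_acceptance_ge:
  assumes "fixed_point K r x y p1 p2 p3 p4" "mixed_strategy K y"
  shows "exp (- lam2 K r x p1 p2) * exp (- lam4 K y p3 p4) \<le> p4"
proof -
  note fp = assms(1)[unfolded fixed_point_def]
  have "0 \<le> lam4 K y p3 p4"
    unfolding lam4_def using second_apps_nonneg[OF assms(2)] fp by simp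
  from acceptance_ge_exp[OF this, of "exp (- lam2 K r x p1 p2)" p4] show ?thesis
    using fp second_match_eq[of K y p3 p4] by (simp add: lam4_def)
qed

lemma mixed_strategy_best_response_ge:
  assumes "mixed_strategy K x"
    and "\<forall>k\<le>K. 0 < x k \<longrightarrow> (\<forall>k'\<le>K. f k' \<le> f k)"
    and "k0 \<le> K"
  shows "f k0 \<le> (\<Sum>k\<le>K. x k * f k)"
proof -
  have "x k * f k0 \<le> x k * f k" if "k \<le> K" for k
    using assms that unfolding mixed_strategy_def
    by (cases "x k = 0") (auto simp: less_le intro: mult_left_mono)
  then have "(\<Sum>k\<le>K. x k * f k0) \<le> (\<Sum>k\<le>K. x k * f k)"
    by (intro sum_mono) simp
  moreover have "(\<Sum>k\<le>K. x k * f k0) = f k0"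
    using assms(1) unfolding mixed_strategy_def by (simp add: sum_distrib_right[symmetric])
  ultimately show ?thesis by simp
qed

lemma one_minus_power_ge:
  fixes p :: real
  assumes "1 \<le> K" "p \<in> {0..1}"
  shows "p \<le> 1 - (1 - p) ^ K"
  using power_decreasing[of 1 K "1 - p"] assms by simp

lemma doctor_value_all_high_ge:
  assumes "1 \<le> K" "0 \<le> v" "p \<in> {0..1}"
  shows "v * p \<le> doctor_value v K p q K"
  unfolding doctor_value_def
  using mult_left_mono[OF one_minus_power_ge[OF assms(1,3)] assms(2)] by simp

lemma doctor_value_all_low_ge:
  assumes "1 \<le> K" "q \<in> {0..1}"
  shows "q \<le> doctor_value v K p q 0"
  unfolding doctor_value_def using one_minus_power_ge[OF assms] by simp

text \<open>Here d is a tier's doctor welfare and v (1 - a) + a (1 - b) that of its hospitals,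
  where a and b are the probabilities of receiving no high (resp. no low) application.\<close>

lemma high_tier_welfare_ge:
  fixes v a b d :: real
  assumes "0 \<le> v" "v * a \<le> d" "0 \<le> a" "b \<le> 1"
  shows "v \<le> d + (v * (1 - a) + a * (1 - b))"
  using assms mult_nonneg_nonneg[of a "1 - b"] by (simp add: algebra_simps)

lemma low_tier_welfare_ge:
  fixes v a b d :: real
  assumes "1 \<le> v" "a * b \<le> d" "a \<le> 1"
  shows "1 \<le> d + (v * (1 - a) + a * (1 - b))"
  using assms mult_right_mono[of 1 v "1 - a"] by (simp add: algebra_simps)

lemma symmetric_NE_high_doctors_ge:
  assumes "symmetric_NE K r v x y p1 p2 p3 p4" "1 \<le> K" "0 \<le> v"
  shows "v * exp (- lam1 K x p1) \<le> (\<Sum>k\<le>K. x k * doctor_value v K p1 p2 k)"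
proof -
  note ne = assms(1)[unfolded symmetric_NE_def]
  have "v * exp (- lam1 K x p1) \<le> v * p1"
    using fixed_point_high_acceptance_ge ne assms(3) mult_left_mono by blast
  also have "\<dots> \<le> doctor_value v K p1 p2 K"
    using doctor_value_all_high_ge[OF assms(2,3)] ne unfolding fixed_point_def by blast
  also have "\<dots> \<le> (\<Sum>k\<le>K. x k * doctor_value v K p1 p2 k)"
    using mixed_strategy_best_response_ge ne by blast
  finally show ?thesis .
qed

lemma symmetric_NE_low_doctors_ge:
  assumes "symmetric_NE K r v x y p1 p2 p3 p4" "1 \<le> K"
  shows "exp (- lam2 K r x p1 p2) * exp (- lam4 K y p3 p4)
    \<le> (\<Sum>k\<le>K. y k * doctor_value v K p3 p4 k)"
proof -
  note ne = assms(1)[unfolded symmetric_NE_def]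
  have "exp (- lam2 K r x p1 p2) * exp (- lam4 K y p3 p4) \<le> p4"
    using fixed_point_low_acceptance_ge ne by blast
  also have "\<dots> \<le> doctor_value v K p3 p4 0"
    using doctor_value_all_low_ge[OF assms(2)] ne unfolding fixed_point_def by blast
  also have "\<dots> \<le> (\<Sum>k\<le>K. y k * doctor_value v K p3 p4 k)"
    using mixed_strategy_best_response_ge ne by blast
  finally show ?thesis .
qed

theorem theorem2:
  fixes K :: nat and r v p1 p2 p3 p4 :: real and x y :: "nat \<Rightarrow> real"
  assumes "K \<ge> 1" and "r > 0" and "v > 1" and "v \<ge> exp 1 / (exp 1 - 1)"
    and "symmetric_NE K r v x y p1 p2 p3 p4"
  shows "welfare K r v x y p1 p2 p3 p4 \<ge> optimum r v / 2"
proof -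
  have "0 \<le> lam2 K r x p1 p2" "0 \<le> lam3 K r y p3"
    using assms(2,5) second_apps_nonneg first_apps_nonneg
    unfolding symmetric_NE_def fixed_point_def lam2_def lam3_def by auto
  then have exps_le_1: "exp (- lam2 K r x p1 p2) \<le> 1" "exp (- lam3 K r y p3) \<le> 1" by auto
  have high_tier: "v \<le> (\<Sum>k\<le>K. x k * doctor_value v K p1 p2 k)
      + (v * (1 - exp (- lam1 K x p1)) + exp (- lam1 K x p1) * (1 - exp (- lam3 K r y p3)))"
    using high_tier_welfare_ge[OF _ symmetric_NE_high_doctors_ge[OF assms(5,1)] _ exps_le_1(2)]
      assms(3) by simp
  have low_tier: "r \<le> r * ((\<Sum>k\<le>K. y k * doctor_value v K p3 p4 k)
      + (v * (1 - exp (- lam2 K r x p1 p2))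
         + exp (- lam2 K r x p1 p2) * (1 - exp (- lam4 K y p3 p4))))"
    using low_tier_welfare_ge[OF _ symmetric_NE_low_doctors_ge[OF assms(5,1)] exps_le_1(1)]
      assms(2,3) by simp
  show ?thesis
    unfolding welfare_def optimum_def using high_tier low_tier by (simp add: distrib_left)
qed

end
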